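(* Let $G$ be a finite group whose order is divisible by at least three distinct primes. If $x,y\in\Sigma(G)$, then $d(x,y)\leq 2$, where $d$ is the distance in $\Gamma(G)$.
   Context: For a finite group $G$, let $\widetilde{\Gamma}(G)$ be the graph with vertex set $G$ in which two distinct elements $x,y$ are adjacent if and only if $|\langle x,y\rangle|$ is divisible by at least three distinct primes; $\Gamma(G)$ is the subgraph obtained by deleting the isolated vertices, and $d(x,y)$ denotes the distance between vertices $x,y$ of $\Gamma(G)$. $\Sigma(G)$ denotes the set of elements $g\in G$ whose order is divisible by at least two distinct primes. *)

theory Defs
  imports "HOL-Computational_Algebra.Primes" "HOL-Algebra.Multiplicative_Group" "HOL-Algebra.Generated_Groups"
begin

definition num_prime_divs :: "nat \<Rightarrow> nat" where
  "num_prime_divs n = card {p::nat. prime p \<and> p dvd n}"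

definition gamma_adj :: "('a, 'b) monoid_scheme \<Rightarrow> 'a \<Rightarrow> 'a \<Rightarrow> bool" where
  "gamma_adj G x y \<longleftrightarrow> x \<in> carrier G \<and> y \<in> carrier G \<and> x \<noteq> y \<and>
     num_prime_divs (card (generate G {x, y})) \<ge> 3"

definition gamma_vertices :: "('a, 'b) monoid_scheme \<Rightarrow> 'a set" where
  "gamma_vertices G = {x \<in> carrier G. \<exists>y. gamma_adj G x y}"

definition gamma_walk :: "('a, 'b) monoid_scheme \<Rightarrow> 'a \<Rightarrow> 'a \<Rightarrow> nat \<Rightarrow> bool" where
  "gamma_walk G x y n \<longleftrightarrow> (\<exists>xs. xs \<noteq> [] \<and> hd xs = x \<and> last xs = y \<and> length xs = Suc n \<and>
     set xs \<subseteq> gamma_vertices G \<and> successively (gamma_adj G) xs)"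

definition gamma_dist_le :: "('a, 'b) monoid_scheme \<Rightarrow> 'a \<Rightarrow> 'a \<Rightarrow> nat \<Rightarrow> bool" where
  "gamma_dist_le G x y n \<longleftrightarrow> x \<in> gamma_vertices G \<and> y \<in> gamma_vertices G \<and>
     (\<exists>k\<le>n. gamma_walk G x y k)"

definition Sigma_set :: "('a, 'b) monoid_scheme \<Rightarrow> 'a set" where
  "Sigma_set G = {g \<in> carrier G. num_prime_divs (group.ord G g) \<ge> 2}"

end

theory Submission
  imports Defs "HOL-Algebra.Sylow"
begin

(* Since ord x and ord y divide |<x,y>|, distinct x and y are adjacent as soon as ord x and
   ord y together have at least three prime divisors (for x = y, the identity is then a common
   neighbour).  Otherwise, as |G| has at least three prime divisors, some prime r of |G|
   divides neither ord x nor ord y; an element z of order r, which exists by Cauchy's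
   theorem, then adds r as a third prime and is adjacent to both x and y. *)

lemma num_prime_divs_eq_card_prime_factors:
  "num_prime_divs n = card (prime_factors n)"
proof (cases "n = 0")
  case True
  then show ?thesis
    using primes_infinite by (simp add: num_prime_divs_def)
next
  case False
  then show ?thesis
    by (simp add: num_prime_divs_def prime_factors_dvd)
qed

lemma (in group) card_subgroup_dvd:
  assumes "subgroup H G" "subgroup K G" "H \<subseteq> K"
  shows "card H dvd card K"
proof -
  have "group (G\<lparr>carrier := K\<rparr>)"
    using assms(2) subgroup.subgroup_is_group is_group by blast
  moreover have "subgroup H (G\<lparr>carrier := K\<rparr>)"
    using subgroup_incl assms by blast
  ultimately have "card (rcosets\<^bsub>G\<lparr>carrier := K\<rparr>\<^esub> H) * card H = card K"
    using group.lagrange by (fastforce simp: order_def)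
  then show ?thesis
    by (metis dvd_triv_right)
qed

lemma (in group) ord_dvd_card_generate:
  assumes "a \<in> S" "S \<subseteq> carrier G"
  shows "ord a dvd card (generate G S)"
proof -
  have "ord a = card (generate G {a})"
    using generate_pow_card assms by blast
  moreover have "generate G {a} \<subseteq> generate G S"
    using mono_generate assms by blast
  moreover have "subgroup (generate G {a}) G" "subgroup (generate G S) G"
    using generate_is_subgroup assms by auto
  ultimately show ?thesis
    using card_subgroup_dvd by metis
qed

lemma (in group) exists_ord_eq_prime:
  assumes "finite (carrier G)" "prime p" "p dvd order G"
  obtains z where "z \<in> carrier G" "ord z = p"
proof -
  obtain m where "order G = p ^ 1 * m"
    using assms(3) by auto
  then obtain P where P: "subgroup P G" "card P = p"
    using sylow_thm[OF assms(2) is_group _ assms(1)] by (metis power_one_right)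
  then have "P \<noteq> {\<one>}"
    using assms(2) not_prime_1 by (metis is_singletonI is_singleton_altdef)
  then obtain z where z: "z \<in> P" "z \<noteq> \<one>"
    using subgroup.one_closed[OF P(1)] by blast
  then have z_carrier: "z \<in> carrier G"
    using P(1) subgroup.subset by blast
  have "generate G {z} \<subseteq> P"
    using generate_subgroup_incl P(1) z(1) by blast
  then have "ord z dvd p"
    using card_subgroup_dvd generate_is_subgroup generate_pow_card z_carrier P
    by (metis empty_subsetI insert_subset)
  moreover have "ord z \<noteq> 1"
    using ord_eq_1 z z_carrier by blast
  ultimately have "ord z = p"
    using assms(2) prime_nat_iff by blast
  with z_carrier show thesis
    using that by blast
qed

lemma gamma_adj_sym: "gamma_adj G x y \<Longrightarrow> gamma_adj G y x"
  unfolding gamma_adj_def by (auto simp: insert_commute)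

lemma gamma_adj_imp_vertices:
  assumes "gamma_adj G x y"
  shows "x \<in> gamma_vertices G" "y \<in> gamma_vertices G"
proof -
  have "x \<in> carrier G" "y \<in> carrier G"
    using assms by (simp_all add: gamma_adj_def)
  then show "x \<in> gamma_vertices G" "y \<in> gamma_vertices G"
    unfolding gamma_vertices_def using assms gamma_adj_sym[OF assms] by blast+
qed

lemma gamma_dist_le_if_adj:
  assumes "gamma_adj G x y" "1 \<le> n"
  shows "gamma_dist_le G x y n"
proof -
  have "gamma_walk G x y 1"
    unfolding gamma_walk_def
    using assms(1) gamma_adj_imp_vertices[OF assms(1)] by (intro exI[of _ "[x, y]"]) simp
  then show ?thesis
    unfolding gamma_dist_le_def using assms(2) gamma_adj_imp_vertices[OF assms(1)] by blast
qed

lemma gamma_dist_le_if_common_neighbour: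
  assumes "gamma_adj G x z" "gamma_adj G z y" "2 \<le> n"
  shows "gamma_dist_le G x y n"
proof -
  have "gamma_walk G x y 2"
    unfolding gamma_walk_def
    using assms(1,2) gamma_adj_imp_vertices[OF assms(1)] gamma_adj_imp_vertices[OF assms(2)]
    by (intro exI[of _ "[x, z, y]"]) simp
  then show ?thesis
    unfolding gamma_dist_le_def
    using assms(3) gamma_adj_imp_vertices[OF assms(1)] gamma_adj_imp_vertices[OF assms(2)] by blast
qed

lemma (in group) gamma_adj_if_prime_factors_ord:
  assumes "finite (carrier G)" "a \<in> carrier G" "b \<in> carrier G" "a \<noteq> b"
    and "3 \<le> card (prime_factors (ord a) \<union> prime_factors (ord b))"
  shows "gamma_adj G a b"
proof -
  let ?H = "generate G {a, b}"
  have H: "subgroup ?H G"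
    using generate_is_subgroup assms(2,3) by simp
  then have "card ?H \<noteq> 0"
    using rev_finite_subset[OF assms(1) subgroup.subset[OF H]] subgroup.one_closed[OF H]
    by (auto simp: card_eq_0_iff)
  moreover have "ord a dvd card ?H" "ord b dvd card ?H"
    using ord_dvd_card_generate assms(2,3) by simp_all
  ultimately have "prime_factors (ord a) \<union> prime_factors (ord b) \<subseteq> prime_factors (card ?H)"
    using dvd_prime_factors by blast
  then have "3 \<le> card (prime_factors (card ?H))"
    using assms(5) card_mono[OF finite_set_mset] le_trans by blast
  then show ?thesis
    unfolding gamma_adj_def num_prime_divs_eq_card_prime_factors using assms(2-4) by blast
qed

lemma (in group) gamma_adj_if_ord_eq_new_prime:
  assumes "finite (carrier G)" "x \<in> Sigma_set G" "z \<in> carrier G" "prime r" "ord z = r"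
    and "r \<notin> prime_factors (ord x)"
  shows "gamma_adj G x z"
proof -
  have x: "x \<in> carrier G" "2 \<le> card (prime_factors (ord x))"
    using assms(2) by (auto simp: Sigma_set_def num_prime_divs_eq_card_prime_factors)
  have "3 \<le> card (prime_factors (ord x) \<union> prime_factors (ord z))"
    using x(2) assms(4-6) by (simp add: prime_prime_factors)
  moreover have "x \<noteq> z"
    using assms(4-6) by (auto simp: prime_prime_factors)
  ultimately show ?thesis
    using gamma_adj_if_prime_factors_ord assms(1,3) x(1) by blast
qed

lemma (in group) gamma_dist_le_if_prime_factors_ord:
  assumes "finite (carrier G)" "a \<in> carrier G" "b \<in> carrier G"
    and "3 \<le> card (prime_factors (ord a) \<union> prime_factors (ord b))"
  shows "gamma_dist_le G a b 2"
proof (cases "a = b")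
  case True
  then have "a \<noteq> \<one>"
    using assms(4) by auto
  then have adj: "gamma_adj G a \<one>"
    using gamma_adj_if_prime_factors_ord[OF assms(1,2) one_closed] assms(4) True by simp
  show ?thesis
    using gamma_dist_le_if_common_neighbour[OF adj gamma_adj_sym[OF adj]] True by simp
next
  case False
  then have "gamma_adj G a b"
    using gamma_adj_if_prime_factors_ord[OF assms(1-3) _ assms(4)] by simp
  then show ?thesis
    by (rule gamma_dist_le_if_adj) simp
qed

theorem lemma2p6:
  fixes G :: "('a, 'b) monoid_scheme"
  assumes "group G" and "finite (carrier G)"
    and "num_prime_divs (order G) \<ge> 3"
    and "x \<in> Sigma_set G" and "y \<in> Sigma_set G"
  shows "gamma_dist_le G x y 2"
proof -
  interpret group G by fact
  let ?X = "prime_factors (ord x)" and ?Y = "prime_factors (ord y)"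
  let ?P = "prime_factors (order G)"
  show ?thesis
  proof (cases "?P \<subseteq> ?X \<union> ?Y")
    case True
    then have "3 \<le> card (?X \<union> ?Y)"
      using assms(3) card_mono[of "?X \<union> ?Y" ?P]
      by (simp add: num_prime_divs_eq_card_prime_factors)
    then show ?thesis
      using gamma_dist_le_if_prime_factors_ord assms(2,4,5) by (simp add: Sigma_set_def)
  next
    case False
    then obtain r where r: "r \<in> ?P" "r \<notin> ?X" "r \<notin> ?Y"
      by blast
    then have "prime r" "r dvd order G"
      by auto
    then obtain z where z: "z \<in> carrier G" "ord z = r"
      by (rule exists_ord_eq_prime[OF assms(2)])
    have adj: "gamma_adj G x z" "gamma_adj G y z"
      using gamma_adj_if_ord_eq_new_prime[OF assms(2) _ z(1) \<open>prime r\<close> z(2)] assms(4,5) r(2,3)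
      by auto
    show ?thesis
      using gamma_dist_le_if_common_neighbour[OF adj(1) gamma_adj_sym[OF adj(2)]] by simp
  qed
qed

end
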